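(* Every factorization curve $\psi_j:\mathbb{P}(V_j)\to\mathbb{P}(\mathfrak{h})$ of a complex factorization structure $\varphi:\mathfrak{h}\to V^*$ is injective.
   Context: $V_1,\ldots,V_m$ are 2-dimensional complex vector spaces, $V^*=V_1^*\otimes\cdots\otimes V_m^*$, $\ell^0$ the annihilator of a line $\ell$, and $\Sigma^0_{j,\ell}=V_1^*\otimes\cdots\otimes\ell^0\otimes\cdots\otimes V_m^*$ ($\ell^0$ in slot $j$). A factorization structure of dimension $m$ is an injective linear map $\varphi:\mathfrak{h}\to V^*$, $\dim\mathfrak{h}=m+1$, with $\dim(\varphi(\mathfrak{h})\cap\Sigma^0_{j,\ell})=1$ for all $j$ and all $\ell$ in a nonempty Zariski-open subset of $\mathbb{P}(V_j)$. The $j$-th factorization curve $\psi_j$ is the unique regular extension to $\mathbb{P}(V_j)$ of the generically defined regular map $\ell\mapsto\varphi^{-1}(\varphi(\mathfrak{h})\cap\Sigma^0_{j,\ell})$. *)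

theory Defs
  imports Complex_Main
begin

(* V_j = C^2 (vectors = pairs), a covector alpha on C^2 is a
   function bool => complex with alpha(v) = alpha False * fst v + alpha True * snd v.
   V^* = V_1^* (x) ... (x) V_m^* is modelled as functions on multi-indices
   (bool lists of length m), zero outside length m.  Slot j is 0-based (j < m).
   h = C^(m+1), modelled as nat => complex vanishing above index m. *)

definition Vstar :: "nat \<Rightarrow> (bool list \<Rightarrow> complex) set" where
  "Vstar m = {T. \<forall>xs. length xs \<noteq> m \<longrightarrow> T xs = 0}"

definition hspace :: "nat \<Rightarrow> (nat \<Rightarrow> complex) set" where
  "hspace m = {x. \<forall>k>m. x k = 0}"

definition covec_app :: "(bool \<Rightarrow> complex) \<Rightarrow> complex \<times> complex \<Rightarrow> complex" where
  "covec_app \<alpha> v = \<alpha> False * fst v + \<alpha> True * snd v"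

text \<open>Sigma0 m j v = V_1^* (x) ... (x) l^0 (x) ... (x) V_m^*, l = span v, l^0 in slot j:
  the span of elementary tensors alpha_0 (x) ... (x) alpha_(m-1) with alpha_j(v) = 0.\<close>
definition Sigma0 :: "nat \<Rightarrow> nat \<Rightarrow> complex \<times> complex \<Rightarrow> (bool list \<Rightarrow> complex) set" where
  "Sigma0 m j v = {T. \<exists>(n::nat) (\<alpha> :: nat \<Rightarrow> nat \<Rightarrow> bool \<Rightarrow> complex).
      (\<forall>r<n. covec_app (\<alpha> r j) v = 0) \<and>
      T = (\<lambda>xs. if length xs = m then (\<Sum>r<n. \<Prod>k<m. \<alpha> r k (xs ! k)) else 0)}"

definition binform :: "nat \<Rightarrow> (nat \<Rightarrow> complex) \<Rightarrow> complex \<times> complex \<Rightarrow> complex" where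
  "binform d c v = (\<Sum>k\<le>d. c k * fst v ^ k * snd v ^ (d - k))"

text \<open>Zariski-open subsets of P^1, as sets of nonzero representatives: complements of
  common zero loci of sets of homogeneous binary forms.\<close>
definition zariski_open_P1 :: "(complex \<times> complex) set \<Rightarrow> bool" where
  "zariski_open_P1 U \<longleftrightarrow> (\<exists>F :: (nat \<times> (nat \<Rightarrow> complex)) set.
      U = {v. v \<noteq> (0, 0) \<and> (\<exists>(d, c)\<in>F. binform d c v \<noteq> 0)})"

definition factorization_structure :: "nat \<Rightarrow> ((nat \<Rightarrow> complex) \<Rightarrow> (bool list \<Rightarrow> complex)) \<Rightarrow> bool" where
  "factorization_structure m \<phi> \<longleftrightarrow>
     (\<forall>x\<in>hspace m. \<phi> x \<in> Vstar m) \<and>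
     (\<forall>x\<in>hspace m. \<forall>y\<in>hspace m. \<phi> (\<lambda>k. x k + y k) = (\<lambda>t. \<phi> x t + \<phi> y t)) \<and>
     (\<forall>x\<in>hspace m. \<forall>c. \<phi> (\<lambda>k. c * x k) = (\<lambda>t. c * \<phi> x t)) \<and>
     inj_on \<phi> (hspace m) \<and>
     (\<forall>j<m. \<exists>U. zariski_open_P1 U \<and> U \<noteq> {} \<and>
        (\<forall>v\<in>U. \<exists>T. T \<noteq> (\<lambda>_. 0) \<and>
           \<phi> ` hspace m \<inter> Sigma0 m j v = {(\<lambda>xs. c * T xs) | c. True}))"

definition regular_P1_map :: "nat \<Rightarrow> (complex \<times> complex \<Rightarrow> nat \<Rightarrow> complex) \<Rightarrow> bool" where
  "regular_P1_map m \<psi> \<longleftrightarrow> (\<exists>d (cs :: nat \<Rightarrow> nat \<Rightarrow> complex).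
      (\<forall>v. \<psi> v = (\<lambda>k. if k \<le> m then binform d (cs k) v else 0)) \<and>
      (\<forall>v. v \<noteq> (0, 0) \<longrightarrow> (\<exists>k\<le>m. binform d (cs k) v \<noteq> 0)))"

text \<open>psi is the j-th factorization curve: a regular map P(V_j) -> P(h) agreeing on a
  nonempty Zariski-open set with l |-> phi^{-1}(phi(h) \<inter> Sigma0_{j,l}).\<close>
definition factorization_curve :: "nat \<Rightarrow> ((nat \<Rightarrow> complex) \<Rightarrow> (bool list \<Rightarrow> complex)) \<Rightarrow> nat
     \<Rightarrow> (complex \<times> complex \<Rightarrow> nat \<Rightarrow> complex) \<Rightarrow> bool" where
  "factorization_curve m \<phi> j \<psi> \<longleftrightarrow> regular_P1_map m \<psi> \<and>
     (\<exists>U. zariski_open_P1 U \<and> U \<noteq> {} \<and>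
        (\<forall>v\<in>U. {x\<in>hspace m. \<phi> x \<in> \<phi> ` hspace m \<inter> Sigma0 m j v}
                = {(\<lambda>k. c * \<psi> v k) | c. True}))"

end

theory Submission
  imports Defs "HOL-Computational_Algebra.Polynomial"
begin

text \<open>Write T u for the tensor phi (psi_j u). Membership of T u in Sigma0_{j,u} says that
  contracting T u with u in slot j gives zero. This is a polynomial identity in u which holds
  on a nonempty Zariski-open set, hence for every u. If psi_j v and psi_j w were proportional
  for independent v and w, then T v would be killed by contraction with the basis v, w of V_j,
  so T v = 0; injectivity of phi would give psi_j v = 0, which a regular map does not allow.\<close>

text \<open>A substitute for homogeneous binary forms of degree e, closed under the ring operations
  used below: homogeneity together with polynomiality along every affine line.\<close>
definition polynomial_homog :: "nat \<Rightarrow> (complex \<times> complex \<Rightarrow> complex) \<Rightarrow> bool" where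
  "polynomial_homog e q \<longleftrightarrow> (\<forall>t a b. q (t * a, t * b) = t ^ e * q (a, b)) \<and>
     (\<forall>a b :: complex \<times> complex. \<exists>Q. \<forall>t. poly Q t = q (fst a + t * fst b, snd a + t * snd b))"

lemma polynomial_homog_binform: "polynomial_homog d (binform d c)"
  unfolding polynomial_homog_def
proof safe
  fix t a b :: complex
  have "binform d c (t * a, t * b) = (\<Sum>k\<le>d. t ^ d * (c k * a ^ k * b ^ (d - k)))"
    unfolding binform_def
  proof (rule sum.cong)
    fix k assume "k \<in> {..d}"
    then have "t ^ d = t ^ k * t ^ (d - k)" by (simp add: power_add[symmetric])
    then show "c k * fst (t * a, t * b) ^ k * snd (t * a, t * b) ^ (d - k)
        = t ^ d * (c k * a ^ k * b ^ (d - k))"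
      by (simp add: power_mult_distrib algebra_simps)
  qed simp
  then show "binform d c (t * a, t * b) = t ^ d * binform d c (a, b)"
    by (simp add: binform_def sum_distrib_left)
next
  fix a b :: "complex \<times> complex"
  show "\<exists>Q. \<forall>t. poly Q t = binform d c (fst a + t * fst b, snd a + t * snd b)"
    by (rule exI[of _ "\<Sum>k\<le>d. [:c k:] * [:fst a, fst b:] ^ k * [:snd a, snd b:] ^ (d - k)"])
       (simp add: poly_sum binform_def mult.assoc)
qed

lemma polynomial_homog_linear: "polynomial_homog 1 (\<lambda>v. fst v * A + snd v * B)"
proof -
  have "binform 1 (\<lambda>k. if k = 0 then B else A) = (\<lambda>v. fst v * A + snd v * B)"
    by (auto simp: binform_def)
  then show ?thesis using polynomial_homog_binform by metis
qed

lemma polynomial_homog_mult: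
  assumes "polynomial_homog e q" "polynomial_homog e' r"
  shows "polynomial_homog (e + e') (\<lambda>v. q v * r v)"
  unfolding polynomial_homog_def
proof safe
  fix t a b
  show "q (t * a, t * b) * r (t * a, t * b) = t ^ (e + e') * (q (a, b) * r (a, b))"
    using assms by (simp add: polynomial_homog_def power_add)
next
  fix a b :: "complex \<times> complex"
  obtain Q R where "\<forall>t. poly Q t = q (fst a + t * fst b, snd a + t * snd b)"
    "\<forall>t. poly R t = r (fst a + t * fst b, snd a + t * snd b)"
    using assms unfolding polynomial_homog_def by blast
  then show "\<exists>P. \<forall>t. poly P t = q (fst a + t * fst b, snd a + t * snd b)
      * r (fst a + t * fst b, snd a + t * snd b)"
    by (intro exI[of _ "Q * R"]) simp
qed

lemma polynomial_homog_add:
  assumes "polynomial_homog e q" "polynomial_homog e r"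
  shows "polynomial_homog e (\<lambda>v. q v + r v)"
  unfolding polynomial_homog_def
proof safe
  fix t a b
  show "q (t * a, t * b) + r (t * a, t * b) = t ^ e * (q (a, b) + r (a, b))"
    using assms by (simp add: polynomial_homog_def distrib_left)
next
  fix a b :: "complex \<times> complex"
  obtain Q R where "\<forall>t. poly Q t = q (fst a + t * fst b, snd a + t * snd b)"
    "\<forall>t. poly R t = r (fst a + t * fst b, snd a + t * snd b)"
    using assms unfolding polynomial_homog_def by blast
  then show "\<exists>P. \<forall>t. poly P t = q (fst a + t * fst b, snd a + t * snd b)
      + r (fst a + t * fst b, snd a + t * snd b)"
    by (intro exI[of _ "Q + R"]) simp
qed

lemma polynomial_homog_sum:
  assumes "finite A" "\<And>k. k \<in> A \<Longrightarrow> polynomial_homog e (q k)"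
  shows "polynomial_homog e (\<lambda>v. \<Sum>k\<in>A. q k v)"
  using assms
proof (induction A rule: finite_induct)
  case empty
  then show ?case by (auto simp: polynomial_homog_def intro: exI[of _ 0])
next
  case (insert x F)
  then show ?case by (simp add: polynomial_homog_add)
qed

lemma poly_eq_0_if_zero_outside_finite:
  fixes P :: "complex poly"
  assumes "finite E" "\<And>t. t \<notin> E \<Longrightarrow> poly P t = 0"
  shows "P = 0"
proof (rule ccontr)
  assume "P \<noteq> 0"
  then have "finite (E \<union> {t. poly P t = 0})" using assms(1) poly_roots_finite by blast
  moreover have "E \<union> {t. poly P t = 0} = UNIV" using assms(2) by blast
  ultimately show False by (simp add: infinite_UNIV_char_0)
qed

text \<open>The point v is the point at infinity of the affine line v0 + t v: the values
  q (v + s v0) = s^e q (v0 + v / s) vanish for s \<noteq> 0, hence also at s = 0.\<close>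
lemma polynomial_homog_zero_if_zero_on_line:
  assumes hq: "polynomial_homog e q"
    and line: "\<And>t. q (fst v0 + t * fst v, snd v0 + t * snd v) = 0"
  shows "q v = 0"
proof -
  obtain R where R: "\<And>s. poly R s = q (fst v + s * fst v0, snd v + s * snd v0)"
    using hq unfolding polynomial_homog_def by blast
  have "poly R s = 0" if "s \<noteq> 0" for s
  proof -
    have "(fst v + s * fst v0, snd v + s * snd v0)
        = (s * (fst v0 + (1 / s) * fst v), s * (snd v0 + (1 / s) * snd v))"
      using that by (simp add: algebra_simps)
    then have "poly R s = s ^ e * q (fst v0 + (1 / s) * fst v, snd v0 + (1 / s) * snd v)"
      using R hq unfolding polynomial_homog_def by metis
    then show ?thesis using line[of "1 / s"] by simp
  qed
  then have "R = 0" by (intro poly_eq_0_if_zero_outside_finite[of "{0}"]) auto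
  then show ?thesis using R[of 0] by simp
qed

lemma polynomial_homog_zero_if_zero_where_nonzero:
  assumes hp: "polynomial_homog d p" and hq: "polynomial_homog e q"
    and p0: "p v0 \<noteq> 0" and v0: "v0 \<noteq> (0, 0)"
    and vanish: "\<And>u. u \<noteq> (0, 0) \<Longrightarrow> p u \<noteq> 0 \<Longrightarrow> q u = 0"
  shows "q v = 0"
proof (rule polynomial_homog_zero_if_zero_on_line[OF hq])
  fix t
  obtain P where P: "\<And>t. poly P t = p (fst v0 + t * fst v, snd v0 + t * snd v)"
    using hp unfolding polynomial_homog_def by blast
  obtain Q where Q: "\<And>t. poly Q t = q (fst v0 + t * fst v, snd v0 + t * snd v)"
    using hq unfolding polynomial_homog_def by blast
  have "P \<noteq> 0" using P[of 0] p0 by auto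
  have "[:fst v0, fst v:] \<noteq> 0 \<or> [:snd v0, snd v:] \<noteq> 0" using v0 by (cases v0) auto
  then have "finite ({t. poly [:fst v0, fst v:] t = 0} \<inter> {t. poly [:snd v0, snd v:] t = 0})"
    using poly_roots_finite by blast
  moreover have "{t. (fst v0 + t * fst v, snd v0 + t * snd v) = (0, 0)}
      = {t. poly [:fst v0, fst v:] t = 0} \<inter> {t. poly [:snd v0, snd v:] t = 0}"
    by (auto simp: algebra_simps)
  ultimately have "finite ({t. poly P t = 0} \<union> {t. (fst v0 + t * fst v, snd v0 + t * snd v) = (0, 0)})"
    using poly_roots_finite[OF \<open>P \<noteq> 0\<close>] by simp
  then have "Q = 0"
    by (rule poly_eq_0_if_zero_outside_finite) (use P Q vanish in auto)
  then show "q (fst v0 + t * fst v, snd v0 + t * snd v) = 0" using Q by simp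
qed

lemma polynomial_homog_zero_if_zero_on_open:
  assumes "polynomial_homog e q" "zariski_open_P1 U" "U \<noteq> {}" "\<And>u. u \<in> U \<Longrightarrow> q u = 0"
  shows "q v = 0"
proof -
  obtain F where UF: "U = {u. u \<noteq> (0, 0) \<and> (\<exists>(d, c)\<in>F. binform d c u \<noteq> 0)}"
    using assms(2) unfolding zariski_open_P1_def by blast
  obtain v0 d c where v0: "v0 \<noteq> (0, 0)" "binform d c v0 \<noteq> 0" and "(d, c) \<in> F"
    using assms(3) UF by blast
  have "q u = 0" if "u \<noteq> (0, 0)" "binform d c u \<noteq> 0" for u
    using assms(4) UF that \<open>(d, c) \<in> F\<close> by blast
  then show ?thesis
    by (rule polynomial_homog_zero_if_zero_where_nonzero[OF polynomial_homog_binform assms(1) v0(2,1)])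
qed

definition contract_slot :: "nat \<Rightarrow> complex \<times> complex \<Rightarrow> (bool list \<Rightarrow> complex) \<Rightarrow> bool list \<Rightarrow> complex"
  where "contract_slot j u T xs = fst u * T (xs[j := False]) + snd u * T (xs[j := True])"

lemma contract_slot_scale: "contract_slot j u (\<lambda>t. c * T t) xs = c * contract_slot j u T xs"
  by (simp add: contract_slot_def algebra_simps)

lemma Sigma0_contract_slot_eq_0:
  assumes "T \<in> Sigma0 m j u" "j < m" "length xs = m"
  shows "contract_slot j u T xs = 0"
proof -
  obtain n :: nat and \<alpha> where \<alpha>: "\<forall>r<n. covec_app (\<alpha> r j) u = 0"
    and T: "T = (\<lambda>xs. if length xs = m then (\<Sum>r<n. \<Prod>k<m. \<alpha> r k (xs ! k)) else 0)"
    using assms(1) unfolding Sigma0_def by blast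
  have split_slot: "(\<Prod>k<m. \<alpha> r k (xs[j := b] ! k)) = \<alpha> r j b * (\<Prod>k\<in>{..<m} - {j}. \<alpha> r k (xs ! k))"
    for r b
  proof -
    have "(\<Prod>k<m. \<alpha> r k (xs[j := b] ! k))
        = \<alpha> r j (xs[j := b] ! j) * (\<Prod>k\<in>{..<m} - {j}. \<alpha> r k (xs[j := b] ! k))"
      using assms(2) by (simp add: prod.remove)
    also have "(\<Prod>k\<in>{..<m} - {j}. \<alpha> r k (xs[j := b] ! k)) = (\<Prod>k\<in>{..<m} - {j}. \<alpha> r k (xs ! k))"
      by (rule prod.cong) auto
    finally show ?thesis using assms by simp
  qed
  have "contract_slot j u T xs
      = (\<Sum>r<n. (\<Prod>k\<in>{..<m} - {j}. \<alpha> r k (xs ! k)) * covec_app (\<alpha> r j) u)"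
    using assms(3) by (simp add: contract_slot_def T split_slot covec_app_def sum_distrib_left
        sum.distrib[symmetric] algebra_simps)
  also have "\<dots> = 0" using \<alpha> by simp
  finally show ?thesis .
qed

definition unit_vec :: "nat \<Rightarrow> nat \<Rightarrow> complex" where
  "unit_vec k = (\<lambda>i. if i = k then 1 else 0)"

lemma linear_on_hspace_zero:
  assumes scal: "\<forall>x\<in>hspace m. \<forall>c. \<phi> (\<lambda>k. c * x k) = (\<lambda>t. c * \<phi> x t)"
  shows "\<phi> (\<lambda>_. 0) = (\<lambda>_. 0)"
  using scal[rule_format, of "\<lambda>_. 0" 0] by (simp add: hspace_def)

lemma linear_on_hspace_expansion:
  assumes add: "\<forall>x\<in>hspace m. \<forall>y\<in>hspace m. \<phi> (\<lambda>k. x k + y k) = (\<lambda>t. \<phi> x t + \<phi> y t)"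
    and scal: "\<forall>x\<in>hspace m. \<forall>c. \<phi> (\<lambda>k. c * x k) = (\<lambda>t. c * \<phi> x t)"
    and x: "x \<in> hspace m"
  shows "\<phi> x = (\<lambda>t. \<Sum>k\<le>m. x k * \<phi> (unit_vec k) t)"
proof -
  have "\<phi> (\<lambda>i. if i < n then x i else 0) = (\<lambda>t. \<Sum>k<n. x k * \<phi> (unit_vec k) t)"
    if "n \<le> Suc m" for n
    using that
  proof (induction n)
    case 0
    then show ?case using linear_on_hspace_zero[OF scal] by simp
  next
    case (Suc n)
    have truncated: "(\<lambda>i. if i < n then x i else 0) \<in> hspace m"
      using x by (auto simp: hspace_def)
    have "unit_vec n \<in> hspace m" using Suc.prems by (auto simp: unit_vec_def hspace_def)
    then have scaled: "(\<lambda>i. x n * unit_vec n i) \<in> hspace m"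
      and "\<phi> (\<lambda>i. x n * unit_vec n i) = (\<lambda>t. x n * \<phi> (unit_vec n) t)"
      using scal by (auto simp: hspace_def)
    moreover have "(\<lambda>i. if i < Suc n then x i else 0)
        = (\<lambda>i. (if i < n then x i else 0) + x n * unit_vec n i)"
      by (auto simp: unit_vec_def less_Suc_eq)
    ultimately show ?case using add truncated Suc by simp
  qed
  from this[of "Suc m"] have "\<phi> (\<lambda>i. if i < Suc m then x i else 0)
      = (\<lambda>t. \<Sum>k\<le>m. x k * \<phi> (unit_vec k) t)"
    by (simp add: lessThan_Suc_atMost)
  moreover have "(\<lambda>i. if i < Suc m then x i else 0) = x" using x by (auto simp: hspace_def)
  ultimately show ?thesis by simp
qed

lemma regular_P1_map_in_hspace:
  assumes "regular_P1_map m \<psi>"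
  shows "\<psi> u \<in> hspace m"
proof -
  obtain d cs where "\<forall>v. \<psi> v = (\<lambda>k. if k \<le> m then binform d (cs k) v else 0)"
    using assms unfolding regular_P1_map_def by blast
  then show ?thesis by (cases u) (simp add: hspace_def)
qed

lemma regular_P1_map_nonzero:
  assumes "regular_P1_map m \<psi>" "v \<noteq> (0, 0)"
  shows "\<psi> v \<noteq> (\<lambda>_. 0)"
  using assms unfolding regular_P1_map_def by (metis order_refl)

lemma factorization_curve_contract_slot_eq_0:
  assumes fs: "factorization_structure m \<phi>" and "j < m"
    and curve: "factorization_curve m \<phi> j \<psi>" and len: "length xs = m"
  shows "contract_slot j u (\<phi> (\<psi> u)) xs = 0"
proof -
  have add: "\<forall>x\<in>hspace m. \<forall>y\<in>hspace m. \<phi> (\<lambda>k. x k + y k) = (\<lambda>t. \<phi> x t + \<phi> y t)"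
    and scal: "\<forall>x\<in>hspace m. \<forall>c. \<phi> (\<lambda>k. c * x k) = (\<lambda>t. c * \<phi> x t)"
    using fs unfolding factorization_structure_def by auto
  obtain d cs where \<psi>: "\<And>v. \<psi> v = (\<lambda>k. if k \<le> m then binform d (cs k) v else 0)"
    using curve unfolding factorization_curve_def regular_P1_map_def by blast
  obtain U where U: "zariski_open_P1 U" "U \<noteq> {}"
    and fibre: "\<forall>v\<in>U. {x\<in>hspace m. \<phi> x \<in> \<phi> ` hspace m \<inter> Sigma0 m j v} = {(\<lambda>k. c * \<psi> v k) | c. True}"
    using curve unfolding factorization_curve_def by blast
  have "\<psi> v \<in> {(\<lambda>k. c * \<psi> v k) | c. True}" for v by (intro CollectI exI[of _ 1]) simp
  then have in_Sigma0: "\<phi> (\<psi> v) \<in> Sigma0 m j v" if "v \<in> U" for v using fibre that by blast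
  define g where "g = (\<lambda>u. \<Sum>k\<le>m. binform d (cs k) u *
      (fst u * \<phi> (unit_vec k) (xs[j := False]) + snd u * \<phi> (unit_vec k) (xs[j := True])))"
  have contraction_eq_g: "contract_slot j u (\<phi> (\<psi> u)) xs = g u" for u
  proof -
    have "\<phi> (\<psi> u) = (\<lambda>t. \<Sum>k\<le>m. \<psi> u k * \<phi> (unit_vec k) t)"
      using linear_on_hspace_expansion[OF add scal] curve regular_P1_map_in_hspace
      unfolding factorization_curve_def by blast
    also have "\<dots> = (\<lambda>t. \<Sum>k\<le>m. binform d (cs k) u * \<phi> (unit_vec k) t)" by (simp add: \<psi>)
    finally show ?thesis by (simp add: contract_slot_def g_def sum_distrib_left sum.distrib algebra_simps)
  qed
  have "polynomial_homog (d + 1) g"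
    unfolding g_def
    by (intro polynomial_homog_sum finite_atMost
        polynomial_homog_mult[OF polynomial_homog_binform polynomial_homog_linear])
  moreover have "g v = 0" if "v \<in> U" for v
    using Sigma0_contract_slot_eq_0[OF in_Sigma0[OF that] \<open>j < m\<close> len] contraction_eq_g by simp
  ultimately have "g u = 0" using polynomial_homog_zero_if_zero_on_open U by blast
  then show ?thesis by (simp add: contraction_eq_g)
qed

lemma independent_contractions_eq_0:
  fixes p q :: complex
  assumes "fst v * p + snd v * q = 0" "fst w * p + snd w * q = 0"
    and "fst v * snd w - snd v * fst w \<noteq> 0"
  shows "p = 0" "q = 0"
proof -
  have "p * (fst v * snd w - snd v * fst w)
      = snd w * (fst v * p + snd v * q) - snd v * (fst w * p + snd w * q)"
    and "q * (fst v * snd w - snd v * fst w)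
      = fst v * (fst w * p + snd w * q) - fst w * (fst v * p + snd v * q)"
    by (simp_all add: algebra_simps)
  then show "p = 0" "q = 0" using assms by simp_all
qed

lemma not_proportional_det_nonzero:
  fixes v w :: "complex \<times> complex"
  assumes "v \<noteq> (0, 0)" "\<nexists>c. w = (c * fst v, c * snd v)"
  shows "fst v * snd w - snd v * fst w \<noteq> 0"
proof
  assume det: "fst v * snd w - snd v * fst w = 0"
  show False
  proof (cases "fst v = 0")
    case True
    then have "snd v \<noteq> 0" using assms(1) by (cases v) auto
    then have "w = (snd w / snd v * fst v, snd w / snd v * snd v)"
      using det True by (cases w) (auto simp: field_simps)
    then show False using assms(2) by blast
  next
    case False
    then have "w = (fst w / fst v * fst v, fst w / fst v * snd v)"
      using det by (cases w) (auto simp: field_simps)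
    then show False using assms(2) by blast
  qed
qed

lemma eq_0_if_contract_slot_eq_0:
  assumes "T \<in> Vstar m" "fst v * snd w - snd v * fst w \<noteq> 0"
    and "\<And>xs. length xs = m \<Longrightarrow> contract_slot j v T xs = 0"
    and "\<And>xs. length xs = m \<Longrightarrow> contract_slot j w T xs = 0"
  shows "T = (\<lambda>_. 0)"
proof
  fix xs
  show "T xs = 0"
  proof (cases "length xs = m")
    case True
    have "T (xs[j := b]) = 0" for b
      using independent_contractions_eq_0[OF assms(3,4)[OF True, unfolded contract_slot_def] assms(2)]
      by (cases b) simp_all
    then show ?thesis using list_update_id by metis
  next
    case False
    then show ?thesis using assms(1) by (simp add: Vstar_def)
  qed
qed

theorem corollary2p7:
  fixes m j :: nat and \<phi> :: "(nat \<Rightarrow> complex) \<Rightarrow> (bool list \<Rightarrow> complex)"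
    and \<psi> :: "complex \<times> complex \<Rightarrow> nat \<Rightarrow> complex"
  assumes "factorization_structure m \<phi>" and "j < m"
    and "factorization_curve m \<phi> j \<psi>"
    and "v \<noteq> (0, 0)" and "w \<noteq> (0, 0)"
    and "\<exists>c::complex. \<psi> w = (\<lambda>k. c * \<psi> v k)"
  shows "\<exists>c::complex. w = (c * fst v, c * snd v)"
proof (rule ccontr)
  assume "\<nexists>c. w = (c * fst v, c * snd v)"
  then have det: "fst v * snd w - snd v * fst w \<noteq> 0"
    using not_proportional_det_nonzero \<open>v \<noteq> (0, 0)\<close> by blast
  have Vstar: "\<forall>x\<in>hspace m. \<phi> x \<in> Vstar m"
    and scal: "\<forall>x\<in>hspace m. \<forall>c. \<phi> (\<lambda>k. c * x k) = (\<lambda>t. c * \<phi> x t)"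
    and inj: "inj_on \<phi> (hspace m)"
    using assms(1) unfolding factorization_structure_def by auto
  have reg: "regular_P1_map m \<psi>" using assms(3) by (simp add: factorization_curve_def)
  note in_hspace = regular_P1_map_in_hspace[OF reg]
  note contraction = factorization_curve_contract_slot_eq_0[OF assms(1-3)]
  obtain c where c: "\<psi> w = (\<lambda>k. c * \<psi> v k)" using assms(6) by blast
  then have "c \<noteq> 0" using regular_P1_map_nonzero[OF reg \<open>w \<noteq> (0, 0)\<close>] by auto
  have "\<phi> (\<psi> w) = (\<lambda>t. c * \<phi> (\<psi> v) t)" unfolding c using scal in_hspace by blast
  then have w_contraction: "contract_slot j w (\<phi> (\<psi> v)) xs = 0" if "length xs = m" for xs
    using contraction[OF that, of w] \<open>c \<noteq> 0\<close> by (simp add: contract_slot_scale)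
  have "\<phi> (\<psi> v) = (\<lambda>_. 0)"
    using bspec[OF Vstar in_hspace] det contraction w_contraction by (rule eq_0_if_contract_slot_eq_0)
  then have "\<phi> (\<psi> v) = \<phi> (\<lambda>_. 0)" using linear_on_hspace_zero[OF scal] by simp
  moreover have "(\<lambda>_. 0) \<in> hspace m" by (simp add: hspace_def)
  ultimately have "\<psi> v = (\<lambda>_. 0)" using inj_onD[OF inj] in_hspace by blast
  then show False using regular_P1_map_nonzero[OF reg \<open>v \<noteq> (0, 0)\<close>] by contradiction
qed

end
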